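(* For every $y\in\mathcal S\times[-1,1]\times\mathcal S$ and all $p,q\in\Delta_d^{\mathcal S}$, \[ \ell^\Theta_{\mathrm C,\infty}\bigl(H(p,y),H(q,y)\bigr)\le\ell^\Theta_{\mathrm C,\infty}(p,q). \]
   Context: $\mathcal S=\{1,\dots,m\}$ finite. $\Theta=\{\theta_1<\dots<\theta_d\}$ with constant stride $\Delta>0$; $\Delta_d$ the probability simplex of $\mathbb R^d$; $\Delta_d^{\mathcal S}$ the set of families $(p_i)_{i\in\mathcal S}$, $p_i\in\Delta_d$. For $u\in\Delta_d$, $\eta^{u,0}:=\sum_ku_k\delta_{\theta_k}$. Categorical projection $\Pi^\Theta_{\mathrm C}$: $\delta_x\mapsto\delta_{\theta_1}$ if $x\le\theta_1$, $\delta_{\theta_d}$ if $x\ge\theta_d$, $\frac{\theta_{k+1}-x}{\Delta}\delta_{\theta_k}+\frac{x-\theta_k}{\Delta}\delta_{\theta_{k+1}}$ if $\theta_k\le x\le\theta_{k+1}$, extended linearly to probability laws. For $b\in\mathbb R$, $L_bu\in\Delta_d$ is defined by $\Pi^\Theta_{\mathrm C}(\text{law of }X+b,\ X\sim\eta^{u,0})=\eta^{L_bu,0}$. One-sample backup: for $y=(s,b,s')$, $H(p,y)=q$ with $q_u=p_u$ for $u\ne s$ and $q_s=L_bp_{s'}$. Coordinate Cramér metric: $F_u(\theta_k):=\sum_{j\le k}u_j$, $\ell^\Theta_{\mathrm C}(u,v)^2:=\Delta\sum_{k=1}^{d-1}(F_u(\theta_k)-F_v(\theta_k))^2$, $\ell^\Theta_{\mathrm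 C,\infty}(p,q):=\max_i\ell^\Theta_{\mathrm C}(p_i,q_i)$. *)

theory Defs
  imports "HOL-Analysis.Analysis"
begin

definition theta :: "real \<Rightarrow> real \<Rightarrow> nat \<Rightarrow> real" where
  "theta th1 Dl k = th1 + (real k - 1) * Dl"

definition prob_simplex :: "nat \<Rightarrow> (nat \<Rightarrow> real) set" where
  "prob_simplex d = {u. (\<forall>k\<in>{1..d}. 0 \<le> u k) \<and> (\<Sum>k=1..d. u k) = 1}"

definition fam_simplex :: "nat \<Rightarrow> nat \<Rightarrow> (nat \<Rightarrow> nat \<Rightarrow> real) set" where
  "fam_simplex m d = {p. \<forall>i\<in>{1..m}. p i \<in> prob_simplex d}"

text \<open>Categorical projection of a Dirac mass delta_x: coefficient on theta_j.\<close>
definition cat_proj_dirac :: "real \<Rightarrow> real \<Rightarrow> nat \<Rightarrow> real \<Rightarrow> nat \<Rightarrow> real" where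
  "cat_proj_dirac th1 Dl d x j =
     (if x \<le> theta th1 Dl 1 then (if j = 1 then 1 else 0)
      else if x \<ge> theta th1 Dl d then (if j = d then 1 else 0)
      else (let k = (SOME k. 1 \<le> k \<and> k < d \<and> theta th1 Dl k \<le> x \<and> x < theta th1 Dl (k+1)) in
            if j = k then (theta th1 Dl (k+1) - x) / Dl
            else if j = k + 1 then (x - theta th1 Dl k) / Dl
            else 0))"

text \<open>L_b u: coefficients of the categorical projection of the law of X + b, X ~ sum_k u_k delta_{theta_k}
  (projection extended linearly).\<close>
definition Lshift :: "real \<Rightarrow> real \<Rightarrow> nat \<Rightarrow> real \<Rightarrow> (nat \<Rightarrow> real) \<Rightarrow> nat \<Rightarrow> real" where
  "Lshift th1 Dl d b u = (\<lambda>j. \<Sum>k=1..d. u k * cat_proj_dirac th1 Dl d (theta th1 Dl k + b) j)"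

definition backup :: "real \<Rightarrow> real \<Rightarrow> nat \<Rightarrow> (nat \<Rightarrow> nat \<Rightarrow> real) \<Rightarrow> nat \<times> real \<times> nat
                      \<Rightarrow> nat \<Rightarrow> nat \<Rightarrow> real" where
  "backup th1 Dl d p y = (case y of (s, b, s') \<Rightarrow> p(s := Lshift th1 Dl d b (p s')))"

definition cdf :: "(nat \<Rightarrow> real) \<Rightarrow> nat \<Rightarrow> real" where
  "cdf u k = (\<Sum>j=1..k. u j)"

definition cramer :: "real \<Rightarrow> nat \<Rightarrow> (nat \<Rightarrow> real) \<Rightarrow> (nat \<Rightarrow> real) \<Rightarrow> real" where
  "cramer Dl d u v = sqrt (Dl * (\<Sum>k=1..d-1. (cdf u k - cdf v k)^2))"

definition cramer_inf :: "nat \<Rightarrow> real \<Rightarrow> nat \<Rightarrow> (nat \<Rightarrow> nat \<Rightarrow> real) \<Rightarrow> (nat \<Rightarrow> nat \<Rightarrow> real) \<Rightarrow> real" where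
  "cramer_inf m Dl d p q = Max ((\<lambda>i. cramer Dl d (p i) (q i)) ` {1..m})"

end

theory Submission
  imports Defs
begin

text \<open>The coordinate Cramer distance is a multiple of the Euclidean distance between CDF vectors,
  and the backup only replaces the component at s by L_b applied to the component at s', so it
  suffices that L_b is non-expansive. Summation by parts shows that the CDF differences of L_b u
  and L_b v are obtained from those of u and v through the matrix with entries
  tent (k - i - b / Dl). Its entries are nonnegative and, since the tents centred at the integers
  form a partition of unity, all its row and column sums are at most 1; by the Schur test such a
  matrix is a contraction for the Euclidean norm. This works for every shift b.\<close>

definition ramp :: "real \<Rightarrow> real" where
  "ramp t = min 1 (max 0 t)"

definition tent :: "real \<Rightarrow> real" where
  "tent t = max 0 (1 - \<bar>t\<bar>)"

lemma tent_eq_ramp_diff: "tent t = ramp (t + 1) - ramp t"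
  unfolding tent_def ramp_def by (auto simp: min_def max_def abs_if)

lemma tent_nonneg: "tent t \<ge> 0"
  by (simp add: tent_def)

lemma tent_minus: "tent (- t) = tent t"
  by (simp add: tent_def)

lemma sum_tent_int_le_1:
  fixes A :: "int set"
  assumes "finite A"
  shows "(\<Sum>j\<in>A. tent (of_int j - t)) \<le> 1"
proof -
  define f where "f = \<lfloor>t\<rfloor>"
  have f: "of_int f \<le> t" "t < of_int f + 1"
    unfolding f_def by linarith+
  have vanish: "tent (of_int j - t) = 0" if "j \<notin> {f, f + 1}" for j
  proof -
    from that have "j \<le> f - 1 \<or> j \<ge> f + 2"
      by auto
    then have "of_int j \<le> of_int f - (1::real) \<or> of_int j \<ge> of_int f + (2::real)"
      by fastforce
    then show ?thesis
      using f by (auto simp: tent_def)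
  qed
  have "(\<Sum>j\<in>A. tent (of_int j - t)) = (\<Sum>j\<in>A \<inter> {f, f + 1}. tent (of_int j - t))"
    using assms vanish by (intro sum.mono_neutral_right) auto
  also have "\<dots> \<le> (\<Sum>j\<in>{f, f + 1}. tent (of_int j - t))"
    by (rule sum_mono2) (auto simp: tent_nonneg)
  also have "\<dots> = 1"
    using f by (simp add: tent_def)
  finally show ?thesis .
qed

lemma sum_tent_nat_le_1:
  assumes "finite A"
  shows "(\<Sum>k\<in>A. tent (real k - t)) \<le> 1"
proof -
  have "(\<Sum>k\<in>A. tent (real k - t)) = (\<Sum>j\<in>int ` A. tent (of_int j - t))"
    by (subst sum.reindex) (auto simp: inj_on_def)
  also have "\<dots> \<le> 1"
    using assms by (intro sum_tent_int_le_1) auto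
  finally show ?thesis .
qed

lemma weighted_Cauchy_Schwarz_sum:
  fixes a e :: "'a \<Rightarrow> real"
  assumes "\<And>i. i \<in> I \<Longrightarrow> a i \<ge> 0"
  shows "(\<Sum>i\<in>I. a i * e i)\<^sup>2 \<le> (\<Sum>i\<in>I. a i) * (\<Sum>i\<in>I. a i * (e i)\<^sup>2)"
proof -
  have "(\<Sum>i\<in>I. a i * e i) = (\<Sum>i\<in>I. sqrt (a i) * (sqrt (a i) * e i))"
    using assms by (intro sum.cong) (auto simp flip: mult.assoc)
  moreover have "(\<Sum>i\<in>I. a i) = (\<Sum>i\<in>I. (sqrt (a i))\<^sup>2)"
    and "(\<Sum>i\<in>I. a i * (e i)\<^sup>2) = (\<Sum>i\<in>I. (sqrt (a i) * e i)\<^sup>2)"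
    using assms by (auto intro!: sum.cong simp: power_mult_distrib)
  ultimately show ?thesis
    using Cauchy_Schwarz_ineq_sum by simp
qed

lemma schur_test_sum_squares:
  fixes a :: "'k \<Rightarrow> 'i \<Rightarrow> real" and e :: "'i \<Rightarrow> real"
  assumes "finite I" "finite K"
    and nonneg: "\<And>k i. k \<in> K \<Longrightarrow> i \<in> I \<Longrightarrow> a k i \<ge> 0"
    and rows: "\<And>k. k \<in> K \<Longrightarrow> (\<Sum>i\<in>I. a k i) \<le> 1"
    and cols: "\<And>i. i \<in> I \<Longrightarrow> (\<Sum>k\<in>K. a k i) \<le> 1"
  shows "(\<Sum>k\<in>K. (\<Sum>i\<in>I. a k i * e i)\<^sup>2) \<le> (\<Sum>i\<in>I. (e i)\<^sup>2)"
proof -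
  have "(\<Sum>i\<in>I. a k i * e i)\<^sup>2 \<le> (\<Sum>i\<in>I. a k i * (e i)\<^sup>2)" if k: "k \<in> K" for k
  proof -
    have "(\<Sum>i\<in>I. a k i * e i)\<^sup>2 \<le> (\<Sum>i\<in>I. a k i) * (\<Sum>i\<in>I. a k i * (e i)\<^sup>2)"
      using nonneg k by (intro weighted_Cauchy_Schwarz_sum)
    also have "\<dots> \<le> (\<Sum>i\<in>I. a k i * (e i)\<^sup>2)"
      using rows[OF k] nonneg k by (intro mult_left_le_one_le sum_nonneg) auto
    finally show ?thesis .
  qed
  then have "(\<Sum>k\<in>K. (\<Sum>i\<in>I. a k i * e i)\<^sup>2) \<le> (\<Sum>k\<in>K. \<Sum>i\<in>I. a k i * (e i)\<^sup>2)"
    by (rule sum_mono)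
  also have "\<dots> = (\<Sum>i\<in>I. (\<Sum>k\<in>K. a k i) * (e i)\<^sup>2)"
    by (subst sum.swap) (simp add: sum_distrib_right)
  also have "\<dots> \<le> (\<Sum>i\<in>I. (e i)\<^sup>2)"
    using cols nonneg by (intro sum_mono mult_left_le_one_le sum_nonneg) auto
  finally show ?thesis .
qed

lemma summation_by_parts_zero_total:
  fixes w g :: "nat \<Rightarrow> real"
  assumes "(\<Sum>j=1..n. w j) = 0"
  shows "(\<Sum>i=1..n. w i * g i) = (\<Sum>i=1..n-1. (\<Sum>j=1..i. w j) * (g i - g (i + 1)))"
proof (cases n)
  case (Suc n')
  have parts: "(\<Sum>i=1..k. w i * g i)
      = (\<Sum>i=1..k. (\<Sum>j=1..i. w j) * (g i - g (i + 1))) + (\<Sum>j=1..k. w j) * g (k + 1)" for k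
    by (induction k) (simp_all add: algebra_simps)
  have "(\<Sum>j=1..n'. w j) = - w n"
    using assms Suc by simp
  then show ?thesis
    using parts[of n'] Suc by (simp add: algebra_simps)
qed simp

lemma theta_diff: "theta th1 Dl i - theta th1 Dl j = (real i - real j) * Dl"
  unfolding theta_def by (simp add: algebra_simps)

lemma theta_bracket_exists:
  assumes Dl: "Dl > 0" and x: "theta th1 Dl 1 < x" "x < theta th1 Dl d"
  shows "\<exists>k. 1 \<le> k \<and> k < d \<and> theta th1 Dl k \<le> x \<and> x < theta th1 Dl (k + 1)"
proof -
  define r where "r = (x - th1) / Dl"
  define k where "k = nat \<lfloor>r\<rfloor> + 1"
  have r: "r > 0" "x = th1 + r * Dl"
    using x Dl by (auto simp: r_def theta_def field_simps)
  have k: "real k - 1 = of_int \<lfloor>r\<rfloor>"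
    using r by (simp add: k_def)
  have below: "theta th1 Dl k \<le> x"
    using k r Dl by (simp add: theta_def mult_right_mono)
  have "r * Dl < real k * Dl"
    using k Dl by (intro mult_strict_right_mono) linarith+
  then have above: "x < theta th1 Dl (k + 1)"
    using r by (simp add: theta_def)
  have "k < d"
  proof (rule ccontr)
    assume "\<not> k < d"
    then have "theta th1 Dl d \<le> theta th1 Dl k"
      using Dl by (simp add: theta_def mult_right_mono)
    then show False
      using below x by simp
  qed
  then show ?thesis
    using below above k_def by auto
qed

lemma sum_two_point_mass_eq_ramp:
  assumes Dl: "Dl > 0" and k0: "1 \<le> k0" "theta th1 Dl k0 \<le> x" "x < theta th1 Dl (k0 + 1)"
  shows "(\<Sum>j=1..k. if j = k0 then (theta th1 Dl (k0 + 1) - x) / Dl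
                    else if j = k0 + 1 then (x - theta th1 Dl k0) / Dl else 0)
       = ramp ((theta th1 Dl (k + 1) - x) / Dl)"
proof -
  define A where "A = (theta th1 Dl (k0 + 1) - x) / Dl"
  have step: "theta th1 Dl (k0 + 1) = theta th1 Dl k0 + Dl"
    using theta_diff[of th1 Dl "k0 + 1" k0] by simp
  have A: "0 < A" "A \<le> 1"
    using k0 Dl step by (auto simp: A_def field_simps)
  have "(x - theta th1 Dl k0) / Dl = 1 - A"
    using Dl step by (simp add: A_def field_simps)
  then have "(\<Sum>j=1..k. if j = k0 then A else if j = k0 + 1 then (x - theta th1 Dl k0) / Dl else 0)
      = (\<Sum>j=1..k. (if j = k0 then A else 0) + (if j = k0 + 1 then 1 - A else 0))"
    by (intro sum.cong) auto
  also have "\<dots> = (if k0 \<le> k then A else 0) + (if k0 + 1 \<le> k then 1 - A else 0)"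
    using k0 by (simp add: sum.distrib)
  finally have sum: "(\<Sum>j=1..k. if j = k0 then A else if j = k0 + 1 then (x - theta th1 Dl k0) / Dl else 0)
      = (if k0 \<le> k then A else 0) + (if k0 + 1 \<le> k then 1 - A else 0)" .
  have ramp_arg: "(theta th1 Dl (k + 1) - x) / Dl = A + (real k - real k0)"
    using Dl by (simp add: A_def theta_def field_simps)
  consider "k < k0" | "k = k0" | "k0 + 1 \<le> k"
    by linarith
  then show ?thesis
  proof cases
    case 1
    then have "A + (real k - real k0) \<le> 0"
      using A by linarith
    then show ?thesis
      using 1 unfolding A_def[symmetric] sum ramp_arg by (simp add: ramp_def)
  next
    case 2
    then show ?thesis
      using A unfolding A_def[symmetric] sum ramp_arg by (simp add: ramp_def)
  next
    case 3
    then have "1 \<le> A + (real k - real k0)"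
      using A by linarith
    then show ?thesis
      using 3 unfolding A_def[symmetric] sum ramp_arg by (simp add: ramp_def)
  qed
qed

lemma cat_proj_dirac_cdf:
  assumes Dl: "Dl > 0" and k: "1 \<le> k" "k < d"
  shows "(\<Sum>j=1..k. cat_proj_dirac th1 Dl d x j) = ramp ((theta th1 Dl (k + 1) - x) / Dl)"
proof -
  consider "x \<le> theta th1 Dl 1" | "theta th1 Dl 1 < x" "theta th1 Dl d \<le> x"
    | "theta th1 Dl 1 < x" "x < theta th1 Dl d"
    by linarith
  then show ?thesis
  proof cases
    case 1
    have "1 * Dl \<le> real k * Dl"
      using k Dl by (intro mult_right_mono) auto
    then have "Dl \<le> theta th1 Dl (k + 1) - x"
      using 1 theta_diff[of th1 Dl "k + 1" 1] by simp
    then have "1 \<le> (theta th1 Dl (k + 1) - x) / Dl"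
      using Dl by simp
    then show ?thesis
      using 1 k by (simp add: cat_proj_dirac_def ramp_def)
  next
    case 2
    have "(real (k + 1) - real d) * Dl \<le> 0"
      using k Dl by (intro mult_nonpos_nonneg) auto
    then have "(theta th1 Dl (k + 1) - x) / Dl \<le> 0"
      using 2(2) Dl theta_diff[of th1 Dl "k + 1" d] by (simp add: divide_nonpos_pos)
    then show ?thesis
      using 2 k Dl by (simp add: cat_proj_dirac_def ramp_def)
  next
    case 3
    define k0 where "k0 = (SOME k. 1 \<le> k \<and> k < d \<and> theta th1 Dl k \<le> x \<and> x < theta th1 Dl (k + 1))"
    have "1 \<le> k0 \<and> k0 < d \<and> theta th1 Dl k0 \<le> x \<and> x < theta th1 Dl (k0 + 1)"
      unfolding k0_def using theta_bracket_exists[OF Dl 3] by (rule someI_ex)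
    then have k0: "1 \<le> k0" "theta th1 Dl k0 \<le> x" "x < theta th1 Dl (k0 + 1)"
      by auto
    have "(\<Sum>j=1..k. cat_proj_dirac th1 Dl d x j)
        = (\<Sum>j=1..k. if j = k0 then (theta th1 Dl (k0 + 1) - x) / Dl
                    else if j = k0 + 1 then (x - theta th1 Dl k0) / Dl else 0)"
      unfolding cat_proj_dirac_def Let_def k0_def[symmetric] using 3 by simp
    also have "\<dots> = ramp ((theta th1 Dl (k + 1) - x) / Dl)"
      by (rule sum_two_point_mass_eq_ramp[OF Dl k0])
    finally show ?thesis .
  qed
qed

lemma cdf_Lshift:
  assumes Dl: "Dl > 0" and k: "1 \<le> k" "k < d"
  shows "cdf (Lshift th1 Dl d b u) k = (\<Sum>i=1..d. u i * ramp (real k + 1 - real i - b / Dl))"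
proof -
  have "cdf (Lshift th1 Dl d b u) k
      = (\<Sum>i=1..d. u i * (\<Sum>j=1..k. cat_proj_dirac th1 Dl d (theta th1 Dl i + b) j))"
    unfolding cdf_def Lshift_def by (subst sum.swap) (simp add: sum_distrib_left)
  also have "\<dots> = (\<Sum>i=1..d. u i * ramp (real k + 1 - real i - b / Dl))"
  proof (intro sum.cong refl)
    fix i
    have "(theta th1 Dl (k + 1) - (theta th1 Dl i + b)) / Dl = real k + 1 - real i - b / Dl"
      using Dl by (simp add: theta_def field_simps)
    then show "u i * (\<Sum>j=1..k. cat_proj_dirac th1 Dl d (theta th1 Dl i + b) j)
        = u i * ramp (real k + 1 - real i - b / Dl)"
      using cat_proj_dirac_cdf[OF Dl k] by simp
  qed
  finally show ?thesis .
qed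

lemma cdf_Lshift_diff:
  assumes Dl: "Dl > 0" and k: "1 \<le> k" "k < d"
    and u: "u \<in> prob_simplex d" and v: "v \<in> prob_simplex d"
  shows "cdf (Lshift th1 Dl d b u) k - cdf (Lshift th1 Dl d b v) k
       = (\<Sum>i=1..d-1. tent (real k - real i - b / Dl) * (cdf u i - cdf v i))"
proof -
  define g where "g i = ramp (real k + 1 - real i - b / Dl)" for i
  have "(\<Sum>j=1..d. u j - v j) = 0"
    using u v by (simp add: prob_simplex_def sum_subtractf)
  then have "(\<Sum>i=1..d. (u i - v i) * g i)
      = (\<Sum>i=1..d-1. (\<Sum>j=1..i. u j - v j) * (g i - g (i + 1)))"
    by (rule summation_by_parts_zero_total)
  also have "\<dots> = (\<Sum>i=1..d-1. tent (real k - real i - b / Dl) * (cdf u i - cdf v i))"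
    by (intro sum.cong refl)
      (simp add: g_def cdf_def sum_subtractf tent_eq_ramp_diff algebra_simps)
  finally show ?thesis
    by (simp add: cdf_Lshift[OF Dl k] g_def sum_subtractf left_diff_distrib)
qed

lemma cramer_Lshift_le:
  assumes Dl: "Dl > 0" and u: "u \<in> prob_simplex d" and v: "v \<in> prob_simplex d"
  shows "cramer Dl d (Lshift th1 Dl d b u) (Lshift th1 Dl d b v) \<le> cramer Dl d u v"
proof -
  define a where "a k i = tent (real k - real i - b / Dl)" for k i :: nat
  have "(\<Sum>k=1..d-1. (cdf (Lshift th1 Dl d b u) k - cdf (Lshift th1 Dl d b v) k)\<^sup>2)
      = (\<Sum>k=1..d-1. (\<Sum>i=1..d-1. a k i * (cdf u i - cdf v i))\<^sup>2)"
  proof (intro sum.cong refl)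
    fix k assume "k \<in> {1..d-1}"
    then have "1 \<le> k" "k < d"
      by auto
    then show "(cdf (Lshift th1 Dl d b u) k - cdf (Lshift th1 Dl d b v) k)\<^sup>2
        = (\<Sum>i=1..d-1. a k i * (cdf u i - cdf v i))\<^sup>2"
      by (simp add: a_def cdf_Lshift_diff[OF Dl _ _ u v])
  qed
  also have "\<dots> \<le> (\<Sum>i=1..d-1. (cdf u i - cdf v i)\<^sup>2)"
  proof (rule schur_test_sum_squares)
    show "(\<Sum>i=1..d-1. a k i) \<le> 1" for k
    proof -
      have "a k i = tent (real i - (real k - b / Dl))" for i
        unfolding a_def by (subst tent_minus[symmetric]) (simp add: algebra_simps)
      then show ?thesis
        using sum_tent_nat_le_1[of "{1..d-1}" "real k - b / Dl"] by simp
    qed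
    show "(\<Sum>k=1..d-1. a k i) \<le> 1" for i
      using sum_tent_nat_le_1[of "{1..d-1}" "real i + b / Dl"] by (simp add: a_def diff_diff_eq)
  qed (simp_all add: a_def tent_nonneg)
  finally show ?thesis
    unfolding cramer_def using Dl by (intro real_sqrt_le_mono mult_left_mono) auto
qed

lemma Max_image_le_Max_image:
  assumes "finite I" and "\<And>i. i \<in> I \<Longrightarrow> \<exists>j\<in>I. f i \<le> g j"
  shows "Max (f ` I) \<le> Max (g ` I)"
proof (cases "I = {}")
  case False
  show ?thesis
  proof (rule Max.boundedI)
    fix y assume "y \<in> f ` I"
    then obtain j where "j \<in> I" "y \<le> g j"
      using assms(2) by blast
    then show "y \<le> Max (g ` I)"
      using assms(1) by (meson Max_ge finite_imageI image_eqI order_trans)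
  qed (use assms(1) False in auto)
qed simp

theorem lemma2:
  fixes m d :: nat and th1 Dl :: real and p q :: "nat \<Rightarrow> nat \<Rightarrow> real"
    and s s' :: nat and b :: real
  assumes "m \<ge> 1" and "d \<ge> 1" and "Dl > 0"
    and "s \<in> {1..m}" and "s' \<in> {1..m}" and "b \<in> {-1..1}"
    and "p \<in> fam_simplex m d" and "q \<in> fam_simplex m d"
  shows "cramer_inf m Dl d (backup th1 Dl d p (s, b, s')) (backup th1 Dl d q (s, b, s'))
           \<le> cramer_inf m Dl d p q"
  unfolding cramer_inf_def
proof (rule Max_image_le_Max_image)
  fix i assume i: "i \<in> {1..m}"
  have "p s' \<in> prob_simplex d" "q s' \<in> prob_simplex d"
    using \<open>s' \<in> {1..m}\<close> \<open>p \<in> fam_simplex m d\<close> \<open>q \<in> fam_simplex m d\<close>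
    by (auto simp: fam_simplex_def)
  then have "cramer Dl d (Lshift th1 Dl d b (p s')) (Lshift th1 Dl d b (q s')) \<le> cramer Dl d (p s') (q s')"
    by (rule cramer_Lshift_le[OF \<open>Dl > 0\<close>])
  then show "\<exists>j\<in>{1..m}. cramer Dl d (backup th1 Dl d p (s, b, s') i) (backup th1 Dl d q (s, b, s') i)
      \<le> cramer Dl d (p j) (q j)"
    using i \<open>s' \<in> {1..m}\<close> by (cases "i = s") (auto simp: backup_def)
qed simp

end
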